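(* Let $(\mathbb{B},\|\cdot\|)$ be a real normed space of finite dimension $\dim(\mathbb{B})$. Let $X_1,\dots,X_n$ be independent $\mathbb{B}$-valued random vectors with $\mathbb{E}X_i=0$ and $\mathbb{E}\|X_i\|^2<\infty$, and $S_n:=\sum_{i=1}^nX_i$. Then $$\mathbb{E}\|S_n\|^2\le \dim(\mathbb{B})\sum_{i=1}^n\mathbb{E}\|X_i\|^2 .$$ *)

theory Defs
  imports "HOL-Probability.Probability"
begin

text \<open>A (real) norm on a real vector space, given explicitly as a function,
  since the norm of the normed space in the paper is arbitrary, whereas the
  built-in norm of a euclidean_space type is the Euclidean one.\<close>
definition is_norm :: "('a::real_vector \<Rightarrow> real) \<Rightarrow> bool" where
  "is_norm N \<longleftrightarrow>
     (\<forall>x. N x = 0 \<longleftrightarrow> x = 0) \<and>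
     (\<forall>x y. N (x + y) \<le> N x + N y) \<and>
     (\<forall>c x. N (c *\<^sub>R x) = \<bar>c\<bar> * N x)"

end

theory Submission
  imports Defs "Jordan_Normal_Form.Determinant"
begin

(* Write d = DIM('a).  The inequality is exact (with constant 1) for the
   Euclidean norm: for independent centred vectors the cross terms of E |S|^2 vanish
   coordinatewise, so E |S|^2 = sum_i E |X_i|^2 (Pythagoras in L^2).  An arbitrary norm N
   is then compared with a Euclidean one by John's theorem: there is a linear A with
   N x <= |A x| <= sqrt d * N x, whence E N(S)^2 <= E |A S|^2 = sum_i E |A X_i|^2
   <= d * sum_i E N(X_i)^2.
   The file is organised accordingly:
   (1) elementary facts on an abstract norm N (equivalence with the Euclidean norm);
   (2) the Pythagoras identity for independent centred vectors and the reduction of the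
       theorem to a Euclidean comparison map A;
   (3) determinants of linear endomorphisms of a euclidean_space, via an enumeration of
       its basis and Jordan_Normal_Form matrices;
   (4) John's theorem in the form needed: among the linear maps f with N (f x) <= |x|
       one of maximal determinant exists, and maximality forces |y| <= sqrt d * N (f y),
       since otherwise a reflected stretch of f would have larger determinant;
   (5) the corollary. *)

subsection \<open>Abstract norms on a euclidean space\<close>

lemma is_normD:
  assumes "is_norm N"
  shows "N 0 = 0" "\<And>x. N x = 0 \<longleftrightarrow> x = 0" "\<And>x y. N (x + y) \<le> N x + N y"
    "\<And>c x. N (c *\<^sub>R x) = \<bar>c\<bar> * N x" "\<And>x. N (- x) = N x" "\<And>x. N x \<ge> 0"
proof -
  show hom: "\<And>c x. N (c *\<^sub>R x) = \<bar>c\<bar> * N x" using assms unfolding is_norm_def by blast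
  show "\<And>x. N x = 0 \<longleftrightarrow> x = 0" using assms unfolding is_norm_def by blast
  then show "N 0 = 0" by blast
  show tri: "\<And>x y. N (x + y) \<le> N x + N y" using assms unfolding is_norm_def by blast
  show minus: "\<And>x. N (- x) = N x" using hom[of "-1"] by simp
  fix x
  have "N (x + - x) \<le> N x + N (-x)" by (rule tri)
  then show "N x \<ge> 0" using minus[of x] \<open>N 0 = 0\<close> by simp
qed

lemma is_norm_sum_le:
  assumes "is_norm N" "finite S"
  shows "N (\<Sum>i\<in>S. f i) \<le> (\<Sum>i\<in>S. N (f i))"
  using assms(2)
proof (induction S rule: finite_induct)
  case empty then show ?case using is_normD(1)[OF assms(1)] by simp
next
  case (insert x F)
  then show ?case using is_normD(3)[OF assms(1), of "f x" "sum f F"] by simp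
qed

lemma is_norm_le_euclidean:
  fixes N :: "'a::euclidean_space \<Rightarrow> real"
  assumes "is_norm N"
  shows "N x \<le> (\<Sum>b\<in>Basis. N b) * norm x"
proof -
  have "N x = N (\<Sum>b\<in>Basis. (x \<bullet> b) *\<^sub>R b)" by (simp add: euclidean_representation)
  also have "\<dots> \<le> (\<Sum>b\<in>Basis. N ((x \<bullet> b) *\<^sub>R b))" by (rule is_norm_sum_le[OF assms]) simp
  also have "\<dots> = (\<Sum>b\<in>Basis. \<bar>x \<bullet> b\<bar> * N b)" using is_normD(4)[OF assms] by simp
  also have "\<dots> \<le> (\<Sum>b\<in>Basis. norm x * N b)"
    by (intro sum_mono mult_right_mono) (auto simp: Basis_le_norm is_normD(6)[OF assms])
  finally show ?thesis by (simp add: sum_distrib_left mult.commute)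
qed

lemma is_norm_reverse_triangle:
  assumes "is_norm N"
  shows "\<bar>N x - N y\<bar> \<le> N (x - y)"
proof -
  have "N x \<le> N (x - y) + N y" using is_normD(3)[OF assms, of "x - y" y] by simp
  moreover have "N y \<le> N (y - x) + N x" using is_normD(3)[OF assms, of "y - x" x] by simp
  moreover have "N (y - x) = N (x - y)" using is_normD(5)[OF assms, of "x - y"] by simp
  ultimately show ?thesis by linarith
qed

lemma is_norm_continuous:
  fixes N :: "'a::euclidean_space \<Rightarrow> real"
  assumes "is_norm N"
  shows "continuous_on UNIV N"
proof -
  let ?C = "(\<Sum>b\<in>Basis. N b) + 1"
  have C: "?C > 0" using is_normD(6)[OF assms] by (simp add: add_nonneg_pos sum_nonneg)
  have "dist (N x) (N y) \<le> ?C * dist x y" for x y :: 'a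
  proof -
    have "dist (N x) (N y) \<le> N (x - y)"
      using is_norm_reverse_triangle[OF assms] by (simp add: dist_real_def)
    also have "\<dots> \<le> (\<Sum>b\<in>Basis. N b) * norm (x - y)" by (rule is_norm_le_euclidean[OF assms])
    also have "\<dots> \<le> ?C * dist x y" by (simp add: dist_norm mult_right_mono)
    finally show ?thesis .
  qed
  then show ?thesis
    by (intro lipschitz_on_continuous_on[OF lipschitz_onI]) (auto simp: C less_imp_le)
qed

text \<open>Conversely a norm dominates a multiple of the Euclidean norm: its minimum on the
  (compact) Euclidean unit sphere is positive.\<close>
lemma is_norm_ge_euclidean:
  fixes N :: "'a::euclidean_space \<Rightarrow> real"
  assumes "is_norm N"
  obtains c where "c > 0" "\<And>x. c * norm x \<le> N x"
proof -
  let ?S = "sphere (0::'a) 1"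
  obtain b :: 'a where "b \<in> Basis" using nonempty_Basis by blast
  then have ne: "?S \<noteq> {}" by (auto intro!: exI[of _ b])
  obtain x0 where x0: "x0 \<in> ?S" "\<And>y. y \<in> ?S \<Longrightarrow> N x0 \<le> N y"
    using continuous_attains_inf[OF compact_sphere ne
        continuous_on_subset[OF is_norm_continuous[OF assms]]]
    by blast
  have pos: "N x0 > 0" using x0(1) is_normD(2,6)[OF assms, of x0] by force
  show ?thesis
  proof (rule that[OF pos])
    fix x :: 'a
    show "N x0 * norm x \<le> N x"
    proof (cases "x = 0")
      case True then show ?thesis using is_normD(1)[OF assms] by simp
    next
      case False
      have "N x0 \<le> N ((1 / norm x) *\<^sub>R x)" using False by (intro x0(2)) auto
      also have "\<dots> = N x / norm x" using is_normD(4)[OF assms] by simp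
      finally show ?thesis using False by (simp add: field_simps)
    qed
  qed
qed

subsection \<open>Second moments of sums of independent centred vectors\<close>

text \<open>Products of square-integrable real random variables are integrable (AM--GM bound).\<close>
lemma (in prob_space) integrable_mult_of_square_integrable:
  fixes Z W :: "'a \<Rightarrow> real"
  assumes "Z \<in> borel_measurable M" "integrable M (\<lambda>\<omega>. (Z \<omega>)\<^sup>2)"
    "W \<in> borel_measurable M" "integrable M (\<lambda>\<omega>. (W \<omega>)\<^sup>2)"
  shows "integrable M (\<lambda>\<omega>. Z \<omega> * W \<omega>)"
proof (rule Bochner_Integration.integrable_bound[of _ "\<lambda>\<omega>. (Z \<omega>)\<^sup>2 + (W \<omega>)\<^sup>2"])
  show "integrable M (\<lambda>\<omega>. (Z \<omega>)\<^sup>2 + (W \<omega>)\<^sup>2)" using assms by simp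
  show "(\<lambda>\<omega>. Z \<omega> * W \<omega>) \<in> borel_measurable M" using assms by simp
  have "\<bar>Z \<omega> * W \<omega>\<bar> \<le> (Z \<omega>)\<^sup>2 + (W \<omega>)\<^sup>2" for \<omega>
  proof -
    have "2 * \<bar>Z \<omega> * W \<omega>\<bar> \<le> (Z \<omega>)\<^sup>2 + (W \<omega>)\<^sup>2"
      using sum_squares_bound[of "\<bar>Z \<omega>\<bar>" "\<bar>W \<omega>\<bar>"] by (simp add: abs_mult)
    then show ?thesis using abs_ge_zero[of "Z \<omega> * W \<omega>"] by linarith
  qed
  then show "AE \<omega> in M. norm (Z \<omega> * W \<omega>) \<le> norm ((Z \<omega>)\<^sup>2 + (W \<omega>)\<^sup>2)"
    by (intro AE_I2) simp
qed

lemma (in prob_space) indep_vars_imp_indep_var: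
  assumes ind: "indep_vars (\<lambda>_. borel) Z I" and ij: "i \<in> I" "j \<in> I" "i \<noteq> j"
  shows "indep_var borel (Z i) borel (Z j)"
proof -
  have "indep_var (PiM {i} (\<lambda>_. borel)) (\<lambda>\<omega>. \<lambda>k\<in>{i}. Z k \<omega>)
      (PiM {j} (\<lambda>_. borel)) (\<lambda>\<omega>. \<lambda>k\<in>{j}. Z k \<omega>)"
    using ij by (intro indep_var_restrict[OF ind]) auto
  then have "indep_var borel ((\<lambda>f. f i) \<circ> (\<lambda>\<omega>. \<lambda>k\<in>{i}. Z k \<omega>))
      borel ((\<lambda>f. f j) \<circ> (\<lambda>\<omega>. \<lambda>k\<in>{j}. Z k \<omega>))"
    by (rule indep_var_compose) (simp_all add: measurable_component_singleton)
  then show ?thesis by (simp add: comp_def)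
qed

text \<open>For independent centred real random variables the second moments add up: the cross
  terms \<open>E (Z\<^sub>i Z\<^sub>j) = E Z\<^sub>i E Z\<^sub>j\<close> vanish.\<close>
lemma (in prob_space) second_moment_sum_indep:
  fixes Z :: "'i \<Rightarrow> 'a \<Rightarrow> real"
  assumes fin: "finite I" and ind: "indep_vars (\<lambda>_. borel) Z I"
    and meas: "\<And>i. i \<in> I \<Longrightarrow> Z i \<in> borel_measurable M"
    and sq: "\<And>i. i \<in> I \<Longrightarrow> integrable M (\<lambda>\<omega>. (Z i \<omega>)\<^sup>2)"
    and mean: "\<And>i. i \<in> I \<Longrightarrow> (\<integral>\<omega>. Z i \<omega> \<partial>M) = 0"
  shows "integrable M (\<lambda>\<omega>. (\<Sum>i\<in>I. Z i \<omega>)\<^sup>2)"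
    "(\<integral>\<omega>. (\<Sum>i\<in>I. Z i \<omega>)\<^sup>2 \<partial>M) = (\<Sum>i\<in>I. \<integral>\<omega>. (Z i \<omega>)\<^sup>2 \<partial>M)"
proof -
  have expand: "(\<Sum>i\<in>I. Z i \<omega>)\<^sup>2 = (\<Sum>i\<in>I. \<Sum>j\<in>I. Z i \<omega> * Z j \<omega>)" for \<omega>
    by (simp add: power2_eq_square sum_product)
  have int_prod: "integrable M (\<lambda>\<omega>. Z i \<omega> * Z j \<omega>)" if "i \<in> I" "j \<in> I" for i j
    using that by (intro integrable_mult_of_square_integrable meas sq)
  show "integrable M (\<lambda>\<omega>. (\<Sum>i\<in>I. Z i \<omega>)\<^sup>2)"
    unfolding expand by (intro Bochner_Integration.integrable_sum int_prod)
  have cross: "(\<integral>\<omega>. Z i \<omega> * Z j \<omega> \<partial>M) = (if i = j then \<integral>\<omega>. (Z i \<omega>)\<^sup>2 \<partial>M else 0)"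
    if "i \<in> I" "j \<in> I" for i j
  proof (cases "i = j")
    case True then show ?thesis by (simp add: power2_eq_square)
  next
    case False
    have "(\<integral>\<omega>. Z i \<omega> * Z j \<omega> \<partial>M) = (\<integral>\<omega>. Z i \<omega> \<partial>M) * (\<integral>\<omega>. Z j \<omega> \<partial>M)"
      using that False
      by (intro indep_var_lebesgue_integral indep_vars_imp_indep_var[OF ind]
          square_integrable_imp_integrable[OF meas sq]) auto
    then show ?thesis using False mean that by simp
  qed
  have "(\<integral>\<omega>. (\<Sum>i\<in>I. Z i \<omega>)\<^sup>2 \<partial>M) = (\<Sum>i\<in>I. \<Sum>j\<in>I. \<integral>\<omega>. Z i \<omega> * Z j \<omega> \<partial>M)"
    unfolding expand
    by (simp add: Bochner_Integration.integral_sum Bochner_Integration.integrable_sum int_prod)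
  also have "\<dots> = (\<Sum>i\<in>I. \<Sum>j\<in>I. if i = j then \<integral>\<omega>. (Z i \<omega>)\<^sup>2 \<partial>M else 0)"
    by (intro sum.cong refl) (simp add: cross)
  also have "\<dots> = (\<Sum>i\<in>I. \<integral>\<omega>. (Z i \<omega>)\<^sup>2 \<partial>M)"
    using fin by (simp add: sum.delta)
  finally show "(\<integral>\<omega>. (\<Sum>i\<in>I. Z i \<omega>)\<^sup>2 \<partial>M) = (\<Sum>i\<in>I. \<integral>\<omega>. (Z i \<omega>)\<^sup>2 \<partial>M)" .
qed

text \<open>Apply the real case
  to every coordinate and sum over the basis.\<close>
lemma (in prob_space) second_moment_sum_indep_euclidean:
  fixes Y :: "'i \<Rightarrow> 'a \<Rightarrow> 'b::euclidean_space"
  assumes fin: "finite I" and ind: "indep_vars (\<lambda>_. borel) Y I"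
    and meas: "\<And>i. i \<in> I \<Longrightarrow> Y i \<in> borel_measurable M"
    and int: "\<And>i. i \<in> I \<Longrightarrow> integrable M (Y i)"
    and mean: "\<And>i. i \<in> I \<Longrightarrow> (\<integral>\<omega>. Y i \<omega> \<partial>M) = 0"
    and sq: "\<And>i. i \<in> I \<Longrightarrow> integrable M (\<lambda>\<omega>. (norm (Y i \<omega>))\<^sup>2)"
  shows "integrable M (\<lambda>\<omega>. (norm (\<Sum>i\<in>I. Y i \<omega>))\<^sup>2)"
    "(\<integral>\<omega>. (norm (\<Sum>i\<in>I. Y i \<omega>))\<^sup>2 \<partial>M) = (\<Sum>i\<in>I. \<integral>\<omega>. (norm (Y i \<omega>))\<^sup>2 \<partial>M)"
proof -
  define Z where "Z b i \<omega> = Y i \<omega> \<bullet> b" for b :: 'b and i \<omega>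
  have norm_sq: "(norm v)\<^sup>2 = (\<Sum>b\<in>Basis. (v \<bullet> b)\<^sup>2)" for v :: 'b
    unfolding power2_norm_eq_inner by (subst euclidean_inner) (simp add: power2_eq_square)
  have Z_meas: "Z b i \<in> borel_measurable M" if "i \<in> I" for b i
    unfolding Z_def using meas[OF that] by simp
  have Z_sq: "integrable M (\<lambda>\<omega>. (Z b i \<omega>)\<^sup>2)" if "i \<in> I" "b \<in> Basis" for b i
  proof (rule Bochner_Integration.integrable_bound[OF sq[OF that(1)]])
    show "(\<lambda>\<omega>. (Z b i \<omega>)\<^sup>2) \<in> borel_measurable M" using Z_meas[OF that(1)] by simp
    have "\<bar>Z b i \<omega>\<bar> \<le> norm (Y i \<omega>)" for \<omega>
      unfolding Z_def using Basis_le_norm[OF that(2)] by simp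
    then have "(Z b i \<omega>)\<^sup>2 \<le> (norm (Y i \<omega>))\<^sup>2" for \<omega>
      by (metis abs_ge_zero order_trans power2_abs power_mono)
    then show "AE \<omega> in M. norm ((Z b i \<omega>)\<^sup>2) \<le> norm ((norm (Y i \<omega>))\<^sup>2)" by simp
  qed
  have Z_ind: "indep_vars (\<lambda>_. borel) (Z b) I" for b
  proof -
    have "indep_vars (\<lambda>_. borel) (\<lambda>i. (\<lambda>v. v \<bullet> b) \<circ> Y i) I"
      by (rule indep_vars_compose[OF ind]) simp
    then show ?thesis by (simp add: Z_def[abs_def] comp_def)
  qed
  have Z_mean: "(\<integral>\<omega>. Z b i \<omega> \<partial>M) = 0" if "i \<in> I" for b i
    unfolding Z_def using int[OF that] mean[OF that] by simp
  note coord = second_moment_sum_indep[OF fin Z_ind Z_meas Z_sq Z_mean]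
  have sum_sq: "(norm (\<Sum>i\<in>I. Y i \<omega>))\<^sup>2 = (\<Sum>b\<in>Basis. (\<Sum>i\<in>I. Z b i \<omega>)\<^sup>2)" for \<omega>
    unfolding norm_sq Z_def by (simp add: inner_sum_left)
  show "integrable M (\<lambda>\<omega>. (norm (\<Sum>i\<in>I. Y i \<omega>))\<^sup>2)"
    unfolding sum_sq by (intro Bochner_Integration.integrable_sum coord(1))
  have "(\<integral>\<omega>. (norm (\<Sum>i\<in>I. Y i \<omega>))\<^sup>2 \<partial>M) = (\<Sum>b\<in>Basis. \<integral>\<omega>. (\<Sum>i\<in>I. Z b i \<omega>)\<^sup>2 \<partial>M)"
    unfolding sum_sq by (intro Bochner_Integration.integral_sum coord(1))
  also have "\<dots> = (\<Sum>b\<in>Basis. \<Sum>i\<in>I. \<integral>\<omega>. (Z b i \<omega>)\<^sup>2 \<partial>M)"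
    by (intro sum.cong refl coord(2))
  also have "\<dots> = (\<Sum>i\<in>I. \<Sum>b\<in>Basis. \<integral>\<omega>. (Z b i \<omega>)\<^sup>2 \<partial>M)"
    by (rule sum.swap)
  also have "\<dots> = (\<Sum>i\<in>I. \<integral>\<omega>. (norm (Y i \<omega>))\<^sup>2 \<partial>M)"
    unfolding norm_sq Z_def[symmetric]
    by (intro sum.cong refl Bochner_Integration.integral_sum[symmetric] Z_sq) auto
  finally show "(\<integral>\<omega>. (norm (\<Sum>i\<in>I. Y i \<omega>))\<^sup>2 \<partial>M) = (\<Sum>i\<in>I. \<integral>\<omega>. (norm (Y i \<omega>))\<^sup>2 \<partial>M)" .
qed

lemma (in prob_space) linear_image_indep_centred:
  fixes X :: "'i \<Rightarrow> 'a \<Rightarrow> 'b::euclidean_space" and A :: "'b \<Rightarrow> 'c::euclidean_space"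
  assumes lin: "linear A"
    and meas: "\<And>i. i \<in> I \<Longrightarrow> X i \<in> borel_measurable M"
    and ind: "indep_vars (\<lambda>_. borel) X I"
    and int: "\<And>i. i \<in> I \<Longrightarrow> integrable M (X i)"
    and mean: "\<And>i. i \<in> I \<Longrightarrow> (\<integral>\<omega>. X i \<omega> \<partial>M) = 0"
  shows "\<And>i. i \<in> I \<Longrightarrow> (\<lambda>\<omega>. A (X i \<omega>)) \<in> borel_measurable M"
    "indep_vars (\<lambda>_. borel) (\<lambda>i \<omega>. A (X i \<omega>)) I"
    "\<And>i. i \<in> I \<Longrightarrow> integrable M (\<lambda>\<omega>. A (X i \<omega>))"
    "\<And>i. i \<in> I \<Longrightarrow> (\<integral>\<omega>. A (X i \<omega>) \<partial>M) = 0"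
proof -
  have bl: "bounded_linear A" using lin linear_conv_bounded_linear by blast
  have A_meas: "A \<in> borel_measurable borel"
    by (rule borel_measurable_continuous_onI[OF linear_continuous_on[OF bl]])
  show "(\<lambda>\<omega>. A (X i \<omega>)) \<in> borel_measurable M" if "i \<in> I" for i
    using measurable_compose[OF meas[OF that] A_meas] .
  have "indep_vars (\<lambda>_. borel) (\<lambda>i. A \<circ> X i) I"
    by (rule indep_vars_compose[OF ind]) (simp add: A_meas)
  then show "indep_vars (\<lambda>_. borel) (\<lambda>i \<omega>. A (X i \<omega>)) I" by (simp add: comp_def)
  show "integrable M (\<lambda>\<omega>. A (X i \<omega>))" if "i \<in> I" for i
    using integrable_bounded_linear[OF bl int[OF that]] .
  show "(\<integral>\<omega>. A (X i \<omega>) \<partial>M) = 0" if "i \<in> I" for i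
    unfolding integral_bounded_linear[OF bl int[OF that]] mean[OF that] using linear_0[OF lin] .
qed

lemma (in prob_space) second_moment_sum_indep_comparison:
  fixes N :: "'b::euclidean_space \<Rightarrow> real" and X :: "'i \<Rightarrow> 'a \<Rightarrow> 'b" and A :: "'b \<Rightarrow> 'b"
  assumes nN: "is_norm N" and fin: "finite I"
    and meas: "\<And>i. i \<in> I \<Longrightarrow> X i \<in> borel_measurable M"
    and ind: "indep_vars (\<lambda>_. borel) X I"
    and int: "\<And>i. i \<in> I \<Longrightarrow> integrable M (X i)"
    and mean: "\<And>i. i \<in> I \<Longrightarrow> (\<integral>\<omega>. X i \<omega> \<partial>M) = 0"
    and sq: "\<And>i. i \<in> I \<Longrightarrow> integrable M (\<lambda>\<omega>. (N (X i \<omega>))\<^sup>2)"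
    and lin: "linear A"
    and lower: "\<And>x. N x \<le> norm (A x)"
    and upper: "\<And>x. norm (A x) \<le> K * N x"
  shows "(\<integral>\<omega>. (N (\<Sum>i\<in>I. X i \<omega>))\<^sup>2 \<partial>M) \<le> K\<^sup>2 * (\<Sum>i\<in>I. \<integral>\<omega>. (N (X i \<omega>))\<^sup>2 \<partial>M)"
proof -
  define Y where "Y i \<omega> = A (X i \<omega>)" for i \<omega>
  have Y: "\<And>i. i \<in> I \<Longrightarrow> Y i \<in> borel_measurable M" "indep_vars (\<lambda>_. borel) Y I"
    "\<And>i. i \<in> I \<Longrightarrow> integrable M (Y i)" "\<And>i. i \<in> I \<Longrightarrow> (\<integral>\<omega>. Y i \<omega> \<partial>M) = 0"
    using linear_image_indep_centred[OF lin meas ind int mean] unfolding Y_def[abs_def] by auto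
  have N_meas: "N \<in> borel_measurable borel"
    by (rule borel_measurable_continuous_onI[OF is_norm_continuous[OF nN]])
  have N_sq_le: "(N x)\<^sup>2 \<le> (norm (A x))\<^sup>2" for x
    using lower is_normD(6)[OF nN] by (auto intro!: power_mono)
  have A_sq_le: "(norm (A x))\<^sup>2 \<le> K\<^sup>2 * (N x)\<^sup>2" for x
  proof -
    have "(norm (A x))\<^sup>2 \<le> (K * N x)\<^sup>2" by (rule power_mono[OF upper]) simp
    then show ?thesis by (simp add: power_mult_distrib)
  qed
  have Y_sq: "integrable M (\<lambda>\<omega>. (norm (Y i \<omega>))\<^sup>2)" if "i \<in> I" for i
  proof (rule Bochner_Integration.integrable_bound[of _ "\<lambda>\<omega>. K\<^sup>2 * (N (X i \<omega>))\<^sup>2"])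
    show "integrable M (\<lambda>\<omega>. K\<^sup>2 * (N (X i \<omega>))\<^sup>2)" using sq[OF that] by simp
    show "(\<lambda>\<omega>. (norm (Y i \<omega>))\<^sup>2) \<in> borel_measurable M" using Y(1)[OF that] by simp
    show "AE \<omega> in M. norm ((norm (Y i \<omega>))\<^sup>2) \<le> norm (K\<^sup>2 * (N (X i \<omega>))\<^sup>2)"
      unfolding Y_def using A_sq_le by (intro AE_I2) (simp add: abs_of_nonneg)
  qed
  have pythagoras: "integrable M (\<lambda>\<omega>. (norm (\<Sum>i\<in>I. Y i \<omega>))\<^sup>2)"
    "(\<integral>\<omega>. (norm (\<Sum>i\<in>I. Y i \<omega>))\<^sup>2 \<partial>M) = (\<Sum>i\<in>I. \<integral>\<omega>. (norm (Y i \<omega>))\<^sup>2 \<partial>M)"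
    using second_moment_sum_indep_euclidean[OF fin Y(2)] Y(1,3,4) Y_sq by blast+
  have N_sum_le: "(N (\<Sum>i\<in>I. X i \<omega>))\<^sup>2 \<le> (norm (\<Sum>i\<in>I. Y i \<omega>))\<^sup>2" for \<omega>
    using N_sq_le[of "\<Sum>i\<in>I. X i \<omega>"] unfolding Y_def linear_sum[OF lin] .
  have int_N_sum: "integrable M (\<lambda>\<omega>. (N (\<Sum>i\<in>I. X i \<omega>))\<^sup>2)"
  proof (rule Bochner_Integration.integrable_bound[OF pythagoras(1)])
    show "(\<lambda>\<omega>. (N (\<Sum>i\<in>I. X i \<omega>))\<^sup>2) \<in> borel_measurable M"
    proof -
      have "(\<lambda>\<omega>. \<Sum>i\<in>I. X i \<omega>) \<in> borel_measurable M"
        using meas by (intro borel_measurable_sum) auto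
      then have "(\<lambda>\<omega>. N (\<Sum>i\<in>I. X i \<omega>)) \<in> borel_measurable M"
        by (rule measurable_compose[OF _ N_meas])
      then show ?thesis by simp
    qed
    show "AE \<omega> in M. norm ((N (\<Sum>i\<in>I. X i \<omega>))\<^sup>2) \<le> norm ((norm (\<Sum>i\<in>I. Y i \<omega>))\<^sup>2)"
      using N_sum_le by simp
  qed
  have "(\<integral>\<omega>. (N (\<Sum>i\<in>I. X i \<omega>))\<^sup>2 \<partial>M) \<le> (\<integral>\<omega>. (norm (\<Sum>i\<in>I. Y i \<omega>))\<^sup>2 \<partial>M)"
    using int_N_sum pythagoras(1) N_sum_le by (rule integral_mono)
  also have "\<dots> = (\<Sum>i\<in>I. \<integral>\<omega>. (norm (Y i \<omega>))\<^sup>2 \<partial>M)"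
    by (rule pythagoras(2))
  also have "\<dots> \<le> (\<Sum>i\<in>I. \<integral>\<omega>. K\<^sup>2 * (N (X i \<omega>))\<^sup>2 \<partial>M)"
    using Y_sq sq A_sq_le by (intro sum_mono integral_mono) (auto simp: Y_def)
  also have "\<dots> = K\<^sup>2 * (\<Sum>i\<in>I. \<integral>\<omega>. (N (X i \<omega>))\<^sup>2 \<partial>M)"
    by (simp add: sum_distrib_left)
  finally show ?thesis .
qed

subsection \<open>Determinants of linear endomorphisms of a euclidean space\<close>

text \<open>A fixed enumeration \<open>basis_vec 0, \<dots>, basis_vec (d - 1)\<close> of the basis, so that linear
  maps can be represented by (Jordan_Normal_Form) matrices.\<close>
definition basis_list :: "'a::euclidean_space list" where
  "basis_list = (SOME xs. set xs = Basis \<and> distinct xs)"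

definition basis_vec :: "nat \<Rightarrow> 'a::euclidean_space" where
  "basis_vec i = basis_list ! i"

lemma basis_list:
  "set (basis_list::'a::euclidean_space list) = Basis" "distinct (basis_list::'a list)"
  "length (basis_list::'a list) = DIM('a)"
proof -
  have "\<exists>xs. set xs = (Basis::'a set) \<and> distinct xs" by (rule finite_distinct_list) simp
  then have "set (basis_list::'a list) = Basis \<and> distinct (basis_list::'a list)"
    unfolding basis_list_def by (rule someI_ex)
  then show "set (basis_list::'a list) = Basis" "distinct (basis_list::'a list)" by auto
  then show "length (basis_list::'a list) = DIM('a)" using distinct_card by metis
qed

lemma basis_vec_in_Basis: "i < DIM('a) \<Longrightarrow> (basis_vec i :: 'a::euclidean_space) \<in> Basis"
  unfolding basis_vec_def using basis_list by (metis nth_mem)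

lemma inner_basis_vec:
  assumes "i < DIM('a)" "j < DIM('a)"
  shows "(basis_vec i :: 'a::euclidean_space) \<bullet> basis_vec j = (if i = j then 1 else 0)"
proof -
  have "(basis_vec i = (basis_vec j :: 'a)) = (i = j)"
    unfolding basis_vec_def using basis_list(2,3)[where 'a='a] assms
    by (simp add: nth_eq_iff_index_eq)
  then show ?thesis
    using basis_vec_in_Basis[OF assms(1)] basis_vec_in_Basis[OF assms(2)] by (auto simp: inner_Basis)
qed

lemma basis_vec_expansion:
  "(x::'a::euclidean_space) = (\<Sum>k=0..<DIM('a). (x \<bullet> basis_vec k) *\<^sub>R basis_vec k)"
proof -
  have "bij_betw ((!) (basis_list::'a list)) {..<length (basis_list::'a list)} (set basis_list)"
    by (rule bij_betw_nth) (auto simp: basis_list)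
  then have bij: "bij_betw (basis_vec :: nat \<Rightarrow> 'a) {0..<DIM('a)} Basis"
    unfolding basis_vec_def[abs_def] using basis_list[where 'a='a]
    by (simp add: lessThan_atLeast0)
  have "(\<Sum>k=0..<DIM('a). (x \<bullet> basis_vec k) *\<^sub>R basis_vec k) = (\<Sum>b\<in>Basis. (x \<bullet> b) *\<^sub>R b)"
    using sum.reindex_bij_betw[OF bij, of "\<lambda>b. (x \<bullet> b) *\<^sub>R b"] by simp
  then show ?thesis by (simp add: euclidean_representation)
qed

definition coord_mat :: "('a::euclidean_space \<Rightarrow> 'a) \<Rightarrow> real mat" where
  "coord_mat f = Matrix.mat DIM('a) DIM('a) (\<lambda>(i,j). f (basis_vec j) \<bullet> basis_vec i)"

definition lin_det :: "('a::euclidean_space \<Rightarrow> 'a) \<Rightarrow> real" where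
  "lin_det f = Determinant.det (coord_mat f)"

lemma coord_mat_carrier: "coord_mat (f::'a::euclidean_space \<Rightarrow> 'a) \<in> carrier_mat DIM('a) DIM('a)"
  unfolding coord_mat_def by simp

lemma coord_mat_index:
  "i < DIM('a) \<Longrightarrow> j < DIM('a) \<Longrightarrow>
    coord_mat (f::'a::euclidean_space \<Rightarrow> 'a) $$ (i,j) = f (basis_vec j) \<bullet> basis_vec i"
  unfolding coord_mat_def by simp

lemma coord_mat_comp:
  fixes f g :: "'a::euclidean_space \<Rightarrow> 'a"
  assumes lin: "linear f"
  shows "coord_mat (f \<circ> g) = coord_mat f * coord_mat g"
proof (rule eq_matI)
  fix i j assume "i < dim_row (coord_mat f * coord_mat g)" "j < dim_col (coord_mat f * coord_mat g)"
  then have i: "i < DIM('a)" and j: "j < DIM('a)" by (auto simp: coord_mat_def)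
  have "(coord_mat f * coord_mat g) $$ (i,j)
      = (\<Sum>k=0..<DIM('a). (f (basis_vec k) \<bullet> basis_vec i) * (g (basis_vec j) \<bullet> basis_vec k))"
    using i j coord_mat_carrier[of f] coord_mat_carrier[of g]
    by (simp add: scalar_prod_def coord_mat_index)
  also have "\<dots> = f (\<Sum>k=0..<DIM('a). (g (basis_vec j) \<bullet> basis_vec k) *\<^sub>R basis_vec k) \<bullet> basis_vec i"
    by (simp add: linear_sum[OF lin] linear_scale[OF lin] inner_sum_left mult.commute)
  also have "\<dots> = f (g (basis_vec j)) \<bullet> basis_vec i" using basis_vec_expansion[of "g (basis_vec j)"] by simp
  finally show "coord_mat (f \<circ> g) $$ (i, j) = (coord_mat f * coord_mat g) $$ (i, j)"
    using i j by (simp add: coord_mat_index)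
qed (auto simp: coord_mat_def)

lemma lin_det_comp: "linear f \<Longrightarrow> lin_det (f \<circ> g) = lin_det f * lin_det g"
  unfolding lin_det_def by (simp add: coord_mat_comp det_mult[OF coord_mat_carrier coord_mat_carrier])

text \<open>Leibniz' formula shows that the determinant depends continuously on the operator.\<close>
lemma continuous_lin_det:
  "continuous_on UNIV (\<lambda>T::'a::euclidean_space \<Rightarrow>\<^sub>L 'a. lin_det (blinfun_apply T))"
proof -
  have "lin_det (f::'a \<Rightarrow> 'a) = (\<Sum>p | p permutes {0..<DIM('a)}.
     of_int (sign p) * (\<Prod>i = 0..<DIM('a). f (basis_vec (p i)) \<bullet> basis_vec i))" for f
    unfolding lin_det_def det_def'[OF coord_mat_carrier]
    by (intro sum.cong refl arg_cong2[where f="(*)"] prod.cong)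
       (auto simp: coord_mat_index permutes_in_image)
  then show ?thesis
    by (simp only:) (intro continuous_intros continuous_on_blinfun_matrix continuous_on_id)
qed

definition stretch :: "'a::real_inner \<Rightarrow> real \<Rightarrow> real \<Rightarrow> 'a \<Rightarrow> 'a" where
  "stretch e a b x = a *\<^sub>R ((x \<bullet> e) *\<^sub>R e) + b *\<^sub>R (x - (x \<bullet> e) *\<^sub>R e)"

lemma linear_stretch: "linear (stretch e a b)"
  unfolding stretch_def by (rule linearI) (simp_all add: inner_add_left algebra_simps)

lemma stretch_same: "stretch e a a x = a *\<^sub>R x"
  by (simp add: stretch_def algebra_simps)

text \<open>Along the first enumerated basis vector the stretch has a diagonal matrix, so its
  determinant is \<open>a b\<^sup>d\<^sup>-\<^sup>1\<close>.\<close>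
lemma lin_det_stretch:
  "lin_det (stretch (basis_vec 0) a b :: 'a::euclidean_space \<Rightarrow> 'a) = a * b ^ (DIM('a) - 1)"
proof -
  let ?d = "DIM('a)" and ?m = "coord_mat (stretch (basis_vec 0) a b :: 'a \<Rightarrow> 'a)"
  have d: "0 < ?d" by simp
  have entry: "?m $$ (i,j) = (if i = j then (if i = 0 then a else b) else 0)"
    if "i < ?d" "j < ?d" for i j
    using that d by (auto simp: coord_mat_index stretch_def inner_diff_left inner_basis_vec)
  have dim: "dim_row ?m = ?d" "dim_col ?m = ?d" by (simp_all add: coord_mat_def)
  have "upper_triangular ?m"
    unfolding upper_triangular_def
  proof (intro allI impI)
    fix i j assume "i < dim_row ?m" "j < i"
    then show "?m $$ (i, j) = 0" using entry[of i j] by (simp add: dim)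
  qed
  then have "lin_det (stretch (basis_vec 0) a b :: 'a \<Rightarrow> 'a) = prod_list (diag_mat ?m)"
    unfolding lin_det_def by (rule det_upper_triangular[OF _ coord_mat_carrier])
  also have "diag_mat ?m = map (\<lambda>i. if i = 0 then a else b) [0..<?d]"
    by (auto simp: diag_mat_def entry dim intro!: map_cong)
  also have "\<dots> = a # map (\<lambda>i. b) [1..<?d]"
    using d by (auto simp: upt_conv_Cons[OF d] intro!: map_cong)
  also have "prod_list \<dots> = a * b ^ (?d - 1)" by (simp add: map_replicate_const)
  finally show ?thesis .
qed

text \<open>The reflection in the hyperplane orthogonal to \<open>w\<close> (the identity if \<open>w = 0\<close>).\<close>
definition reflect :: "'a::real_inner \<Rightarrow> 'a \<Rightarrow> 'a" where
  "reflect w x = x - (2 * (x \<bullet> w) / (w \<bullet> w)) *\<^sub>R w"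

lemma linear_reflect: "linear (reflect w)"
  unfolding reflect_def
  by (rule linearI) (simp_all add: inner_add_left algebra_simps add_divide_distrib)

lemma reflect_reflect: "reflect w (reflect w x) = x"
proof (cases "w = 0")
  case True then show ?thesis by (simp add: reflect_def)
next
  case False
  then have ww: "w \<bullet> w \<noteq> 0" by simp
  have "reflect w x \<bullet> w = - (x \<bullet> w)" unfolding reflect_def using ww by (simp add: inner_diff_left)
  then show ?thesis unfolding reflect_def[of w "reflect w x"] using ww by (simp add: reflect_def)
qed

lemma norm_reflect: "norm (reflect w x) = norm x"
proof (cases "w = 0")
  case True then show ?thesis by (simp add: reflect_def)
next
  case False
  then have ww: "w \<bullet> w \<noteq> 0" by simp
  have "(norm (reflect w x))\<^sup>2 = (norm x)\<^sup>2"
    unfolding power2_norm_eq_inner reflect_def using ww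
    by (simp add: inner_diff_left inner_diff_right inner_commute field_simps power2_eq_square)
  then show ?thesis by (simp add: power2_eq_iff_nonneg)
qed

lemma reflect_onto:
  assumes "norm y = t" "norm e = 1"
  shows "reflect (y - t *\<^sub>R e) y = t *\<^sub>R e"
proof (cases "y - t *\<^sub>R e = 0")
  case True then show ?thesis by (simp add: reflect_def)
next
  case False
  let ?w = "y - t *\<^sub>R e"
  have yy: "y \<bullet> y = t\<^sup>2" using assms(1) by (simp add: power2_norm_eq_inner[symmetric])
  have ee: "e \<bullet> e = 1" using assms(2) by (simp add: power2_norm_eq_inner[symmetric])
  have eq: "2 * (y \<bullet> ?w) = ?w \<bullet> ?w"
    using yy ee by (simp add: inner_diff_left inner_diff_right inner_commute power2_eq_square algebra_simps)
  have "?w \<bullet> ?w \<noteq> 0" using False by simp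
  then have "2 * (y \<bullet> ?w) / (?w \<bullet> ?w) = 1" by (simp only: eq) simp
  then have "reflect ?w y = y - 1 *\<^sub>R ?w" unfolding reflect_def by (simp only:)
  then show ?thesis by simp
qed

text \<open>Bernoulli's inequality in the form used to show that a stretch has determinant
  \<open>> 1\<close>: a small loss \<open>(1 - \<eta>)\<^sup>n\<close> is outweighed by a sufficiently large gain \<open>1 + c \<eta>\<close>.\<close>
lemma bernoulli_product_gt_one:
  fixes c \<eta> :: real and n :: nat
  assumes "0 < \<eta>" "\<eta> \<le> 1" "0 \<le> c" "real n * (1 + c * \<eta>) < c"
  shows "(1 + c * \<eta>) * (1 - \<eta>) ^ n > 1"
proof -
  have "1 < 1 + \<eta> * (c - real n * (1 + c * \<eta>))" using assms by simp
  also have "\<dots> = (1 + c * \<eta>) * (1 - real n * \<eta>)" by (simp add: algebra_simps)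
  also have "\<dots> \<le> (1 + c * \<eta>) * (1 - \<eta>) ^ n"
    using Bernoulli_inequality[of "- \<eta>" n] assms(1-3) by (intro mult_left_mono) auto
  finally show ?thesis .
qed

text \<open>Numerical choice behind the stretch: if \<open>t > \<surd>d\<close> there are parameters for which the
  stretch \<open>diag(a, b, \<dots>, b)\<close> has determinant \<open>a b\<^sup>d\<^sup>-\<^sup>1 > 1\<close> while the inequalities used in
  \<open>stretch_into_unit_ball\<close> below hold.  All parameters are chosen close to
  \<open>a = b = 1, k = m = 0\<close>, as functions of a small \<open>\<eta> > 0\<close>.\<close>
lemma stretch_parameters:
  fixes t :: real and d :: nat
  assumes d: "d \<ge> 1" and t: "t > sqrt d"
  obtains a b k m where "0 < b" "b \<le> 1" "0 \<le> k" "k \<le> 1" "a = m + k * t"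
    "k\<^sup>2 + b\<^sup>2 - m\<^sup>2 > 0" "k\<^sup>2 \<le> (k\<^sup>2 + b\<^sup>2 - m\<^sup>2) * (1 - b\<^sup>2)" "a * b ^ (d - 1) > 1"
proof -
  have "1 \<le> sqrt d" using d by simp
  then have t1: "t > 1" using t by linarith
  have "(sqrt d)\<^sup>2 < t\<^sup>2" using t by (intro power_strict_mono) auto
  then have t2: "t\<^sup>2 > d" by simp
  define \<rho> where "\<rho> = (t\<^sup>2 - d) / 2"
  define \<theta> where "\<theta> = 1 + t\<^sup>2 + \<rho>"
  define c where "c = t\<^sup>2 - 1 - \<rho>"
  define P where "P \<eta> = 2 * \<theta> - 2 + \<eta> * (4 * t\<^sup>2 + 1 - \<theta>\<^sup>2)" for \<eta>
  have \<rho>: "\<rho> > 0" and c: "c - real (d - 1) > 0"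
    using t2 d by (simp_all add: \<rho>_def c_def of_nat_diff field_simps)
  have small: "\<forall>\<^sub>F \<eta> in at_right 0. 0 < \<eta> \<and> 0 < 1 - 2 * t * \<eta> \<and> 0 < P \<eta> \<and>
      0 < P \<eta> * (2 - \<eta>) - 4 * t\<^sup>2 \<and> real (d - 1) * (1 + c * \<eta>) < c"
  proof -
    have lim: "((\<lambda>\<eta>. g \<eta>) \<longlongrightarrow> g 0) (at_right 0) \<Longrightarrow> g 0 > 0 \<Longrightarrow>
        \<forall>\<^sub>F \<eta> in at_right 0. 0 < g \<eta>" for g :: "real \<Rightarrow> real"
      using order_tendstoD(1) by blast
    have "\<forall>\<^sub>F \<eta> in at_right 0. 0 < 1 - 2 * t * \<eta>"
      by (rule lim) (auto intro!: tendsto_eq_intros)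
    moreover have "\<forall>\<^sub>F \<eta> in at_right 0. 0 < P \<eta>"
      using t1 \<rho> by (intro lim) (auto simp: P_def \<theta>_def intro!: tendsto_eq_intros add_pos_nonneg)
    moreover have "\<forall>\<^sub>F \<eta> in at_right 0. 0 < P \<eta> * (2 - \<eta>) - 4 * t\<^sup>2"
      by (rule lim) (auto simp: P_def \<theta>_def \<rho> intro!: tendsto_eq_intros)
    moreover have "\<forall>\<^sub>F \<eta> in at_right 0. 0 < c - real (d - 1) * (1 + c * \<eta>)"
      using c by (intro lim) (auto intro!: tendsto_eq_intros)
    ultimately show ?thesis
      using eventually_at_right_less by eventually_elim auto
  qed
  obtain \<eta> where \<eta>: "0 < \<eta>" "0 < 1 - 2 * t * \<eta>" "0 < P \<eta>"
    "0 < P \<eta> * (2 - \<eta>) - 4 * t\<^sup>2" "real (d - 1) * (1 + c * \<eta>) < c"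
    using eventually_happens[OF small] by (auto simp: trivial_limit_at_right_real)
  define b where "b = 1 - \<eta>"
  define k where "k = 2 * t * \<eta>"
  define m where "m = 1 - \<theta> * \<eta>"
  define a where "a = m + k * t"
  have Q: "k\<^sup>2 + b\<^sup>2 - m\<^sup>2 = \<eta> * P \<eta>"
    by (simp add: k_def b_def m_def P_def power2_eq_square algebra_simps)
  have "(k\<^sup>2 + b\<^sup>2 - m\<^sup>2) * (1 - b\<^sup>2) - k\<^sup>2 = \<eta>\<^sup>2 * (P \<eta> * (2 - \<eta>) - 4 * t\<^sup>2)"
    unfolding Q by (simp add: k_def b_def power2_eq_square algebra_simps)
  moreover have "\<eta>\<^sup>2 * (P \<eta> * (2 - \<eta>) - 4 * t\<^sup>2) > 0" using \<eta> by simp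
  ultimately have cond: "k\<^sup>2 \<le> (k\<^sup>2 + b\<^sup>2 - m\<^sup>2) * (1 - b\<^sup>2)" by linarith
  have a: "a = 1 + c * \<eta>"
    by (simp add: a_def m_def k_def \<theta>_def c_def power2_eq_square algebra_simps)
  have "\<eta> < t * \<eta>" using t1 \<eta>(1) by simp
  then have "\<eta> < 1" using \<eta>(2) by linarith
  then have det: "a * b ^ (d - 1) > 1"
    unfolding a b_def using bernoulli_product_gt_one[OF \<eta>(1) _ _ \<eta>(5)] c by simp
  show ?thesis
  proof (rule that[OF _ _ _ _ a_def _ cond det])
    show "0 < b" "b \<le> 1" "0 \<le> k" "k \<le> 1"
      using \<eta> t1 \<open>\<eta> < 1\<close> by (auto simp: b_def k_def)
    show "k\<^sup>2 + b\<^sup>2 - m\<^sup>2 > 0" unfolding Q using \<eta>(1,3) by simp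
  qed
qed

text \<open>Euclidean part of the estimate: writing \<open>x = s e + w\<close> with \<open>w \<bottom> e\<close>, the vector
  \<open>m s e + b w\<close> has length at most \<open>|x| - k |s|\<close>.  This is a quadratic-form inequality in
  \<open>(|s|, |x|)\<close>: \<open>Q ((|x| - k|s|)\<^sup>2 - |m s e + b w|\<^sup>2)\<close> is a sum of nonnegative terms.\<close>
lemma stretch_euclid_bound:
  fixes x e :: "'a::real_inner"
  assumes e: "norm e = 1" and k: "0 \<le> k" "k \<le> 1"
    and Q: "k\<^sup>2 + b\<^sup>2 - m\<^sup>2 > 0" and cond: "k\<^sup>2 \<le> (k\<^sup>2 + b\<^sup>2 - m\<^sup>2) * (1 - b\<^sup>2)"
  shows "norm ((m * (x \<bullet> e)) *\<^sub>R e + b *\<^sub>R (x - (x \<bullet> e) *\<^sub>R e)) \<le> norm x - k * \<bar>x \<bullet> e\<bar>"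
proof -
  define s where "s = x \<bullet> e"
  define w where "w = x - s *\<^sub>R e"
  define v where "v = (m * s) *\<^sub>R e + b *\<^sub>R w"
  define r where "r = norm x"
  define q where "q = k\<^sup>2 + b\<^sup>2 - m\<^sup>2"
  have ee: "e \<bullet> e = 1" using e by (simp add: power2_norm_eq_inner[symmetric])
  have we: "w \<bullet> e = 0" "e \<bullet> w = 0"
    unfolding w_def s_def using ee by (simp_all add: inner_diff_left inner_diff_right inner_commute)
  have r2: "r\<^sup>2 = s\<^sup>2 + (norm w)\<^sup>2"
  proof -
    have x: "x = s *\<^sub>R e + w" by (simp add: w_def)
    show ?thesis unfolding r_def power2_norm_eq_inner
      by (subst (1 2) x) (simp add: inner_add_left inner_add_right we ee power2_eq_square)
  qed
  have v2: "(norm v)\<^sup>2 = m\<^sup>2 * s\<^sup>2 + b\<^sup>2 * (norm w)\<^sup>2"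
    unfolding v_def power2_norm_eq_inner
    by (simp add: inner_add_left inner_add_right we ee power2_eq_square algebra_simps)
  have sr: "\<bar>s\<bar> \<le> r" unfolding s_def r_def using Cauchy_Schwarz_ineq2[of x e] e by simp
  have key: "q * ((r - k * \<bar>s\<bar>)\<^sup>2 - (norm v)\<^sup>2) = (q * \<bar>s\<bar> - k * r)\<^sup>2 + (q * (1 - b\<^sup>2) - k\<^sup>2) * r\<^sup>2"
    unfolding v2 using r2 unfolding q_def
    by (simp add: power2_eq_square algebra_simps power2_abs[symmetric])
  have "0 \<le> (q * \<bar>s\<bar> - k * r)\<^sup>2 + (q * (1 - b\<^sup>2) - k\<^sup>2) * r\<^sup>2"
    using cond unfolding q_def by (intro add_nonneg_nonneg mult_nonneg_nonneg) auto
  then have "0 \<le> (r - k * \<bar>s\<bar>)\<^sup>2 - (norm v)\<^sup>2"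
    using key Q unfolding q_def by (metis zero_le_mult_iff not_le)
  moreover have "0 \<le> r - k * \<bar>s\<bar>" using mult_mono[OF k(2) sr] k by simp
  ultimately have "norm v \<le> r - k * \<bar>s\<bar>"
    using power2_le_imp_le[of "norm v" "r - k * \<bar>s\<bar>"] by linarith
  then show ?thesis unfolding v_def w_def s_def r_def .
qed

text \<open>If a subadditive, absolutely homogeneous \<open>Nn\<close> maps the Euclidean unit ball into its
  own unit ball and \<open>Nn (t e) \<le> 1\<close>, then so does its composition with the stretch: the
  \<open>e\<close>-part \<open>k s (t e)\<close> costs at most \<open>k |s|\<close>, the rest is controlled Euclideanly.\<close>
lemma stretch_into_unit_ball:
  fixes Nn :: "'a::real_inner \<Rightarrow> real" and e :: 'a
  assumes tri: "\<And>x y. Nn (x + y) \<le> Nn x + Nn y"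
    and hom: "\<And>c x. Nn (c *\<^sub>R x) = \<bar>c\<bar> * Nn x"
    and le: "\<And>x. Nn x \<le> norm x"
    and e: "norm e = 1" and te: "Nn (t *\<^sub>R e) \<le> 1"
    and a: "a = m + k * t" and k: "0 \<le> k" "k \<le> 1"
    and Q: "k\<^sup>2 + b\<^sup>2 - m\<^sup>2 > 0" and cond: "k\<^sup>2 \<le> (k\<^sup>2 + b\<^sup>2 - m\<^sup>2) * (1 - b\<^sup>2)"
  shows "Nn (stretch e a b x) \<le> norm x"
proof -
  define v where "v = (m * (x \<bullet> e)) *\<^sub>R e + b *\<^sub>R (x - (x \<bullet> e) *\<^sub>R e)"
  have split: "stretch e a b x = (k * (x \<bullet> e)) *\<^sub>R (t *\<^sub>R e) + v"
    unfolding stretch_def v_def a by (simp add: algebra_simps)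
  have "Nn (stretch e a b x) \<le> \<bar>k * (x \<bullet> e)\<bar> * Nn (t *\<^sub>R e) + norm v"
    unfolding split using tri[of "(k * (x \<bullet> e)) *\<^sub>R (t *\<^sub>R e)" v] hom le[of v]
    by (simp del: scaleR_scaleR)
  also have "\<dots> \<le> \<bar>k * (x \<bullet> e)\<bar> * 1 + norm v"
    using te by (intro add_right_mono mult_left_mono) auto
  also have "\<dots> \<le> norm x"
    using stretch_euclid_bound[OF e k Q cond, of x] k by (simp add: v_def abs_mult)
  finally show ?thesis .
qed

subsection \<open>John's theorem: comparing a norm with a Euclidean norm\<close>

definition into_unit_ball :: "('a::real_normed_vector \<Rightarrow> real) \<Rightarrow> ('a \<Rightarrow> 'a) \<Rightarrow> bool" where
  "into_unit_ball N f \<longleftrightarrow> (\<forall>x. N (f x) \<le> norm x)"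

text \<open>Such operators form a compact set: closed by continuity of \<open>N\<close>, bounded because \<open>N\<close>
  dominates a multiple of the Euclidean norm.\<close>
lemma compact_into_unit_ball:
  fixes N :: "'a::euclidean_space \<Rightarrow> real"
  assumes nN: "is_norm N"
  shows "compact {T::'a \<Rightarrow>\<^sub>L 'a. into_unit_ball N (blinfun_apply T)}"
  unfolding compact_eq_bounded_closed
proof
  obtain c where c: "c > 0" "\<And>x. c * norm x \<le> N x" using is_norm_ge_euclidean[OF nN] by blast
  show "bounded {T::'a \<Rightarrow>\<^sub>L 'a. into_unit_ball N (blinfun_apply T)}"
  proof (rule boundedI)
    fix T :: "'a \<Rightarrow>\<^sub>L 'a" assume "T \<in> {T. into_unit_ball N (blinfun_apply T)}"
    then have "norm (blinfun_apply T x) \<le> (1 / c) * norm x" for x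
      using c(2)[of "blinfun_apply T x"] c(1) unfolding into_unit_ball_def
      by (auto simp: field_simps intro: order_trans)
    then show "norm T \<le> 1 / c" using c(1) by (intro norm_blinfun_bound) auto
  qed
  have "closed {T::'a \<Rightarrow>\<^sub>L 'a. N (blinfun_apply T x) \<le> norm x}" for x
  proof (rule closed_Collect_le)
    have "continuous_on UNIV (\<lambda>T::'a \<Rightarrow>\<^sub>L 'a. blinfun_apply T x)"
      by (intro linear_continuous_on
          bounded_bilinear.bounded_linear_left[OF bounded_bilinear_blinfun_apply])
    then show "continuous_on UNIV (\<lambda>T::'a \<Rightarrow>\<^sub>L 'a. N (blinfun_apply T x))"
      using continuous_on_compose2[OF is_norm_continuous[OF nN]] by blast
  qed (rule continuous_on_const)
  then show "closed {T::'a \<Rightarrow>\<^sub>L 'a. into_unit_ball N (blinfun_apply T)}"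
    unfolding into_unit_ball_def by (rule closed_Collect_all)
qed

text \<open>Among the linear maps of the Euclidean ball into the \<open>N\<close>-ball there is one of maximal
  determinant, and this determinant is positive (small multiples of the identity qualify).\<close>
lemma max_det_into_unit_ball:
  fixes N :: "'a::euclidean_space \<Rightarrow> real"
  assumes nN: "is_norm N"
  obtains f where "linear f" "into_unit_ball N f" "lin_det f > 0"
    "\<And>g. linear g \<Longrightarrow> into_unit_ball N g \<Longrightarrow> lin_det g \<le> lin_det f"
proof -
  define F where "F = {T::'a \<Rightarrow>\<^sub>L 'a. into_unit_ball N (blinfun_apply T)}"
  define C where "C = (\<Sum>b\<in>Basis. N b) + 1"
  have C: "C > 0" using is_normD(6)[OF nN] by (simp add: C_def add_nonneg_pos sum_nonneg)
  define \<epsilon> where "\<epsilon> = 1 / C"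
  have eps: "\<epsilon> > 0" using C by (simp add: \<epsilon>_def)
  have scale_into: "into_unit_ball N (stretch (basis_vec 0) \<epsilon> \<epsilon>)"
    unfolding into_unit_ball_def stretch_same
  proof
    fix x :: 'a
    have "N (\<epsilon> *\<^sub>R x) = \<epsilon> * N x" using eps is_normD(4)[OF nN] by simp
    also have "\<dots> \<le> \<epsilon> * (C * norm x)"
      using is_norm_le_euclidean[OF nN, of x] norm_ge_zero[of x] eps
      unfolding C_def distrib_right mult_1 by (intro mult_left_mono) linarith+
    also have "\<dots> = norm x" using C by (simp add: \<epsilon>_def)
    finally show "N (\<epsilon> *\<^sub>R x) \<le> norm x" .
  qed
  have blinfun_of: "blinfun_apply (Blinfun g) = g" if "linear g" for g :: "'a \<Rightarrow> 'a"
    using that by (simp add: bounded_linear_Blinfun_apply linear_conv_bounded_linear)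
  have "Blinfun (stretch (basis_vec 0) \<epsilon> \<epsilon>) \<in> F"
    using scale_into by (simp add: F_def blinfun_of linear_stretch)
  then have "F \<noteq> {}" by blast
  then obtain T where TF: "T \<in> F"
    and Tmax: "\<And>S. S \<in> F \<Longrightarrow> lin_det (blinfun_apply S) \<le> lin_det (blinfun_apply T)"
    using continuous_attains_sup[OF compact_into_unit_ball[OF nN, folded F_def] _
        continuous_on_subset[OF continuous_lin_det]] by blast
  show ?thesis
  proof (rule that)
    show "linear (blinfun_apply T)"
      using blinfun.bounded_linear_right linear_conv_bounded_linear by blast
    show "into_unit_ball N (blinfun_apply T)" using TF by (simp add: F_def)
    show max: "lin_det g \<le> lin_det (blinfun_apply T)" if "linear g" "into_unit_ball N g" for g
      using Tmax[of "Blinfun g"] that by (simp add: F_def blinfun_of)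
    have "0 < lin_det (stretch (basis_vec 0) \<epsilon> \<epsilon> :: 'a \<Rightarrow> 'a)"
      using eps by (simp add: lin_det_stretch)
    also have "\<dots> \<le> lin_det (blinfun_apply T)" by (rule max[OF linear_stretch scale_into])
    finally show "lin_det (blinfun_apply T) > 0" .
  qed
qed

text \<open>The key step of John's theorem: for a determinant-maximal \<open>f\<close>, no vector of
  Euclidean length \<open>t > \<surd>d\<close> lies in \<open>f\<^sup>-\<^sup>1\<close> of the \<open>N\<close>-unit ball.  Otherwise reflect it
  onto the first basis direction and compose \<open>f\<close> with a suitable stretch along it: the result
  still maps into the \<open>N\<close>-ball but has a larger determinant.\<close>
lemma max_det_no_long_vector:
  fixes N :: "'a::euclidean_space \<Rightarrow> real"
  assumes nN: "is_norm N" and lin: "linear f" and into: "into_unit_ball N f"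
    and pos: "lin_det f > 0"
    and max: "\<And>g. linear g \<Longrightarrow> into_unit_ball N g \<Longrightarrow> lin_det g \<le> lin_det f"
    and y: "norm y = t" "t > sqrt DIM('a)" "N (f y) \<le> 1"
  shows False
proof -
  define e :: 'a where "e = basis_vec 0"
  have e: "norm e = 1" unfolding e_def using basis_vec_in_Basis[where 'a='a, of 0] by (simp add: norm_Basis)
  define H where "H = reflect (y - t *\<^sub>R e)"
  have linH: "linear H" and HH: "\<And>x. H (H x) = x" and normH: "\<And>x. norm (H x) = norm x"
    unfolding H_def by (simp_all add: linear_reflect reflect_reflect norm_reflect)
  have Hy: "H y = t *\<^sub>R e" unfolding H_def by (rule reflect_onto[OF y(1) e])
  obtain a b k m where p: "0 < b" "b \<le> 1" "0 \<le> k" "k \<le> 1" "a = m + k * t"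
    "k\<^sup>2 + b\<^sup>2 - m\<^sup>2 > 0" "k\<^sup>2 \<le> (k\<^sup>2 + b\<^sup>2 - m\<^sup>2) * (1 - b\<^sup>2)" "a * b ^ (DIM('a) - 1) > 1"
    by (rule stretch_parameters[of "DIM('a)" t]) (use y(2) in \<open>auto simp: Suc_le_eq\<close>)
  define S where "S = f \<circ> H \<circ> stretch e a b \<circ> H"
  have linS: "linear S" unfolding S_def by (intro linear_compose linH linear_stretch lin)
  have "into_unit_ball N S"
    unfolding into_unit_ball_def
  proof
    fix x
    have "N (f (H (stretch e a b (H x)))) \<le> norm (H x)"
    proof (rule stretch_into_unit_ball[OF _ _ _ e _ p(5,3,4,6,7)])
      show "N (f (H (u + v))) \<le> N (f (H u)) + N (f (H v))" for u v
        using is_normD(3)[OF nN] by (simp add: linear_add[OF linH] linear_add[OF lin])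
      show "N (f (H (c *\<^sub>R u))) = \<bar>c\<bar> * N (f (H u))" for c u
        using is_normD(4)[OF nN] by (simp add: linear_scale[OF linH] linear_scale[OF lin])
      show "N (f (H u)) \<le> norm u" for u
        using into normH[of u] unfolding into_unit_ball_def by metis
      show "N (f (H (t *\<^sub>R e))) \<le> 1" using y(3) by (simp add: Hy[symmetric] HH)
    qed
    then show "N (S x) \<le> norm x" by (simp add: S_def normH)
  qed
  then have "lin_det S \<le> lin_det f" by (rule max[OF linS])
  have "lin_det H * lin_det H = 1"
  proof -
    have "H \<circ> H = stretch e 1 1" by (rule ext) (simp add: HH stretch_same)
    then show ?thesis using lin_det_comp[OF linH, of H] by (simp add: e_def lin_det_stretch)
  qed
  moreover have "lin_det S = lin_det f * lin_det H * lin_det (stretch e a b) * lin_det H"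
    unfolding S_def by (simp add: lin_det_comp linear_compose lin linH linear_stretch)
  ultimately have "lin_det S = lin_det f * (a * b ^ (DIM('a) - 1))"
    by (simp add: e_def lin_det_stretch algebra_simps)
  also have "\<dots> > lin_det f" using pos p(8) by simp
  finally show False using \<open>lin_det S \<le> lin_det f\<close> by simp
qed

text \<open>Consequently a determinant-maximal \<open>f\<close> satisfies \<open>|y| \<le> \<surd>d N (f y)\<close>: scale a
  violating \<open>y\<close> into the \<open>N\<close>-unit ball.\<close>
lemma max_det_lower_bound:
  fixes N :: "'a::euclidean_space \<Rightarrow> real"
  assumes nN: "is_norm N" and lin: "linear f" and into: "into_unit_ball N f"
    and pos: "lin_det f > 0"
    and max: "\<And>g. linear g \<Longrightarrow> into_unit_ball N g \<Longrightarrow> lin_det g \<le> lin_det f"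
  shows "norm y \<le> sqrt DIM('a) * N (f y)"
proof (rule ccontr)
  let ?s = "sqrt DIM('a)"
  assume "\<not> ?thesis"
  then have long: "?s * N (f y) < norm y" by simp
  have Nf: "N (f (c *\<^sub>R y)) = \<bar>c\<bar> * N (f y)" for c
    using is_normD(4)[OF nN] by (simp add: linear_scale[OF lin])
  note no_long = max_det_no_long_vector[OF nN lin into pos max]
  show False
  proof (cases "N (f y) = 0")
    case True
    then have "y \<noteq> 0" using long by auto
    then show False
      using no_long[of "((?s + 1) / norm y) *\<^sub>R y" "?s + 1"] True
      by (simp add: Nf add_nonneg_pos)
  next
    case False
    then have "N (f y) > 0" using is_normD(6)[OF nN, of "f y"] by simp
    then show False
      using no_long[of "(1 / N (f y)) *\<^sub>R y" "norm y / N (f y)"] long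
      by (simp add: Nf pos_less_divide_eq mult.commute)
  qed
qed

text \<open>Take \<open>A\<close> the inverse of a determinant-maximal \<open>f\<close>.\<close>
theorem john_euclidean_comparison:
  fixes N :: "'a::euclidean_space \<Rightarrow> real"
  assumes nN: "is_norm N"
  obtains A :: "'a \<Rightarrow> 'a" where "linear A" "\<And>x. N x \<le> norm (A x)"
    "\<And>x. norm (A x) \<le> sqrt DIM('a) * N x"
proof -
  obtain f where lin: "linear f" and into: "into_unit_ball N f" and pos: "lin_det f > 0"
    and max: "\<And>g. linear g \<Longrightarrow> into_unit_ball N g \<Longrightarrow> lin_det g \<le> lin_det f"
    using max_det_into_unit_ball[OF nN] by blast
  note lower = max_det_lower_bound[OF nN lin into pos max]
  have "inj f"
  proof (rule injI)
    fix x y assume "f x = f y"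
    then have "f (x - y) = 0" by (simp add: linear_diff[OF lin])
    then show "x = y" using lower[of "x - y"] is_normD(1)[OF nN] by simp
  qed
  then have "surj f" by (rule linear_injective_imp_surjective[OF lin]) simp
  then obtain g where g: "linear g" "f \<circ> g = id"
    using linear_surjective_right_inverse[OF lin] by blast
  then have fg: "f (g x) = x" for x by (metis comp_apply id_apply)
  show ?thesis
  proof (rule that[OF g(1)])
    show "N x \<le> norm (g x)" for x using into fg unfolding into_unit_ball_def by metis
    show "norm (g x) \<le> sqrt DIM('a) * N x" for x using lower[of "g x"] fg by simp
  qed
qed

theorem corollary4:
  fixes M :: "'b measure"
    and N :: "'a::euclidean_space \<Rightarrow> real"
    and X :: "nat \<Rightarrow> 'b \<Rightarrow> 'a"
    and n :: nat
  assumes "prob_space M"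
    and "is_norm N"
    and "\<And>i. i \<in> {1..n} \<Longrightarrow> X i \<in> borel_measurable M"
    and "prob_space.indep_vars M (\<lambda>_. borel) X {1..n}"
    and "\<And>i. i \<in> {1..n} \<Longrightarrow> integrable M (X i)"
    and "\<And>i. i \<in> {1..n} \<Longrightarrow> (\<integral>\<omega>. X i \<omega> \<partial>M) = 0"
    and "\<And>i. i \<in> {1..n} \<Longrightarrow> integrable M (\<lambda>\<omega>. (N (X i \<omega>))\<^sup>2)"
  shows "(\<integral>\<omega>. (N (\<Sum>i=1..n. X i \<omega>))\<^sup>2 \<partial>M)
           \<le> real DIM('a) * (\<Sum>i=1..n. \<integral>\<omega>. (N (X i \<omega>))\<^sup>2 \<partial>M)"
proof -
  interpret prob_space M by fact
  obtain A :: "'a \<Rightarrow> 'a" where A: "linear A" "\<And>x. N x \<le> norm (A x)"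
    "\<And>x. norm (A x) \<le> sqrt DIM('a) * N x"
    using john_euclidean_comparison[OF assms(2)] by blast
  have "(\<integral>\<omega>. (N (\<Sum>i=1..n. X i \<omega>))\<^sup>2 \<partial>M)
      \<le> (sqrt DIM('a))\<^sup>2 * (\<Sum>i=1..n. \<integral>\<omega>. (N (X i \<omega>))\<^sup>2 \<partial>M)"
    by (rule second_moment_sum_indep_comparison[OF assms(2) finite_atLeastAtMost assms(3-7) A])
  then show ?thesis by simp
qed

end
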